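(* Let $N\in\mathbb N$, $w_1,\dots,w_N\in\mathbb R^m$, $\omega(z)=\max_{i=1,\dots,N}\langle w_i,z\rangle$ for $z\in\mathbb R^m$, and $A\in\mathbb R^{m\times n}$. For $\lambda>0$ and $y\in\mathbb R^n$ let $h_\lambda(u)=\frac1{2\lambda}\|\lambda u-y\|^2-\frac1{2\lambda}\|y\|^2$ ($u\in\mathbb R^n$) and $\Psi_\lambda(v)=h_\lambda(A^\top v)+\omega^\star(v)$ ($v\in\mathbb R^m$). Then: (i) $\omega$ is globally $K_\omega$-Lipschitz continuous with $K_\omega=\max_{i}\|w_i\|$, and $\operatorname{dom}\omega^\star$ is bounded; (ii) there is a constant $\theta>0$ (a Hoffman constant depending only on $A^\top$ and the polytope $\operatorname{conv}\{w_1,\dots,w_N\}$, not on $\lambda$ or $y$) such that for every $\lambda>0$ and $y\in\mathbb R^n$: $v\mapsto h_\lambda(A^\top v)$ is convex and $\lambda\|A^\top A\|$-Lipschitz smooth, $\Psi_\lambda$ has a nonempty set $S$ of minimizers, and $\Psi_\lambda$ satisfies quadratic growth with constant $\kappa_\lambda=\lambda/\theta^2$; (iii) if $\lambda\ge\lambda_{\min}>0$, then $\kappa_\lambda\ge\lambda_{\min}/\theta^2$.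
   Context: $\omega^\star$ is the Fenchel conjugate of $\omega$. A proper closed convex $\Psi$ with nonempty minimizer set $S$ satisfies quadratic growth with constant $\kappa>0$ if $\Psi(v)\ge\min\Psi+\frac\kappa2\operatorname{dist}(v|S)^2$ for all $v$. A convex differentiable function $\phi$ is $\ell$-Lipschitz smooth if $\phi(u)-\phi(w)-\langle\nabla\phi(w),u-w\rangle\le\frac\ell2\|u-w\|^2$ for all $u,w$. *)

theory Defs
  imports "HOL-Analysis.Analysis"
begin

definition fenchel_conj :: "('a::real_inner \<Rightarrow> real) \<Rightarrow> 'a \<Rightarrow> ereal" where
  "fenchel_conj f v = (SUP z. ereal (v \<bullet> z - f z))"

definition edom :: "('a \<Rightarrow> ereal) \<Rightarrow> 'a set" where
  "edom g = {v. g v < \<infinity>}"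

definition minimizers :: "('a \<Rightarrow> ereal) \<Rightarrow> 'a set" where
  "minimizers g = {v. \<forall>u. g v \<le> g u}"

definition quadratic_growth :: "('a::metric_space \<Rightarrow> ereal) \<Rightarrow> real \<Rightarrow> bool" where
  "quadratic_growth g \<kappa> \<longleftrightarrow>
     minimizers g \<noteq> {} \<and>
     (\<forall>s\<in>minimizers g. \<bar>g s\<bar> \<noteq> \<infinity> \<and>
        (\<forall>v. g s + ereal (\<kappa> / 2 * (infdist v (minimizers g))\<^sup>2) \<le> g v))"

definition lipschitz_smooth :: "('a::real_inner \<Rightarrow> real) \<Rightarrow> real \<Rightarrow> bool" where
  "lipschitz_smooth \<phi> l \<longleftrightarrow>
     (\<exists>g. (\<forall>w. (\<phi> has_derivative (\<lambda>h. g w \<bullet> h)) (at w)) \<and>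
          (\<forall>u w. \<phi> u - \<phi> w - g w \<bullet> (u - w) \<le> l / 2 * (norm (u - w))\<^sup>2))"

end

theory Submission
  imports Defs
begin

(* The maximum of the linear forms w_i is the support function of the polytope
   P = conv {w_1, ..., w_N}; hence omega is max_i |w_i|-Lipschitz, omega* is the indicator of P,
   and Psi_lambda = f + indicator P with f v = h_lambda (A^T v) = lambda/2 |A^T v|^2 - <A^T v, y>.
   Since f is quadratic, a minimizer v0 of f on P satisfies
   f v - f v0 >= lambda/2 |A^T v - A^T v0|^2 for all v in P, so the minimizers form the
   polyhedron S = P \<inter> {v. A^T v = A^T v0}.  Hoffman's error bound for the linear system
   describing S, whose left-hand side depends only on P and A, gives
   dist(v, S) <= theta |A^T v - A^T v0| on P, whence quadratic growth with constant
   lambda / theta^2.  Hoffman's bound is proved by projecting onto the feasible set: the residual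
   lies in the cone of active constraint normals (Farkas), is a nonnegative combination of
   linearly independent active normals (Caratheodory), and the coefficients of such a
   combination are bounded by a constant times its norm. *)

lemma convex_cone_hull_finite_sum:
  fixes S :: "'a::real_vector set"
  assumes "finite S" and "x \<in> convex_cone hull S"
  obtains l where "\<forall>v\<in>S. 0 \<le> l v" and "x = (\<Sum>v\<in>S. l v *\<^sub>R v)"
proof (cases "S = {}")
  case True
  then show ?thesis using assms(2) that by simp
next
  case False
  then obtain c y where "0 \<le> c" "y \<in> convex hull S" "x = c *\<^sub>R y"
    using assms(2) by (auto simp: convex_cone_hull_convex_hull_nonempty)
  moreover from \<open>y \<in> convex hull S\<close> obtain u where "\<forall>v\<in>S. 0 \<le> u v" "y = (\<Sum>v\<in>S. u v *\<^sub>R v)"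
    by (auto simp: convex_hull_finite[OF assms(1)])
  ultimately show ?thesis
    by (intro that[of "\<lambda>v. c * u v"]) (auto simp: scaleR_sum_right)
qed

lemma conic_combination_eliminate:
  fixes S :: "'a::real_vector set"
  assumes "finite S" and l: "\<forall>v\<in>S. 0 \<le> l v"
    and g: "(\<Sum>v\<in>S. g v *\<^sub>R v) = 0" and "\<exists>v\<in>S. 0 < g v"
  obtains v0 m where "v0 \<in> S" and "m v0 = 0" and "\<forall>v\<in>S. 0 \<le> m v"
    and "(\<Sum>v\<in>S. m v *\<^sub>R v) = (\<Sum>v\<in>S. l v *\<^sub>R v)"
proof -
  define G where "G = {v\<in>S. 0 < g v}"
  define t where "t = Min ((\<lambda>v. l v / g v) ` G)"
  have "finite G" "G \<noteq> {}"
    using assms(1,4) by (auto simp: G_def)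
  then have t_le: "t \<le> l v / g v" if "v \<in> G" for v
    using that by (simp add: t_def)
  have "t \<in> (\<lambda>v. l v / g v) ` G"
    unfolding t_def using \<open>finite G\<close> \<open>G \<noteq> {}\<close> by (intro Min_in) auto
  then obtain v0 where v0: "v0 \<in> G" "t = l v0 / g v0"
    by blast
  then have "0 \<le> t"
    using l by (simp add: G_def)
  define m where "m v = l v - t * g v" for v
  show ?thesis
  proof (rule that[of v0 m])
    show "v0 \<in> S" "m v0 = 0"
      using v0 by (auto simp: G_def m_def)
    show "\<forall>v\<in>S. 0 \<le> m v"
    proof
      fix v assume "v \<in> S"
      show "0 \<le> m v"
      proof (cases "0 < g v")
        case True
        then show ?thesis
          using t_le[of v] \<open>v \<in> S\<close> by (simp add: G_def m_def pos_le_divide_eq)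
      next
        case False
        then have "t * g v \<le> 0"
          using \<open>0 \<le> t\<close> by (simp add: mult_nonneg_nonpos)
        moreover have "0 \<le> l v"
          using l \<open>v \<in> S\<close> by blast
        ultimately show ?thesis
          unfolding m_def by linarith
      qed
    qed
    have "(\<Sum>v\<in>S. m v *\<^sub>R v) = (\<Sum>v\<in>S. l v *\<^sub>R v) - t *\<^sub>R (\<Sum>v\<in>S. g v *\<^sub>R v)"
      by (simp add: m_def scaleR_diff_left scaleR_sum_right sum_subtractf)
    then show "(\<Sum>v\<in>S. m v *\<^sub>R v) = (\<Sum>v\<in>S. l v *\<^sub>R v)"
      using g by simp
  qed
qed

lemma dependent_finite_pos:
  fixes S :: "'a::real_vector set"
  assumes "finite S" and "dependent S"
  obtains g where "(\<Sum>v\<in>S. g v *\<^sub>R v) = 0" and "\<exists>v\<in>S. 0 < g v"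
proof -
  obtain u where u: "(\<Sum>v\<in>S. u v *\<^sub>R v) = 0" and "\<exists>v\<in>S. u v \<noteq> 0"
    using dependent_finite[OF assms(1)] assms(2) by blast
  show ?thesis
  proof (cases "\<exists>v\<in>S. 0 < u v")
    case False
    with \<open>\<exists>v\<in>S. u v \<noteq> 0\<close> have "\<exists>v\<in>S. 0 < - u v"
      by force
    moreover have "(\<Sum>v\<in>S. (- u v) *\<^sub>R v) = 0"
      using u by (simp add: sum_negf)
    ultimately show ?thesis
      by (rule that[rotated])
  qed (rule that[OF u])
qed

lemma conic_caratheodory:
  fixes S :: "'a::real_vector set"
  assumes "finite S" and "\<forall>v\<in>S. 0 \<le> l v"
  obtains T m where "T \<subseteq> S" and "independent T" and "\<forall>v\<in>T. 0 \<le> m v"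
    and "(\<Sum>v\<in>S. l v *\<^sub>R v) = (\<Sum>v\<in>T. m v *\<^sub>R v)"
proof -
  have "\<exists>T m. T \<subseteq> S \<and> independent T \<and> (\<forall>v\<in>T. 0 \<le> m v) \<and>
      (\<Sum>v\<in>S. l v *\<^sub>R v) = (\<Sum>v\<in>T. m v *\<^sub>R v)"
    using assms
  proof (induction "card S" arbitrary: S l rule: less_induct)
    case less
    show ?case
    proof (cases "dependent S")
      case False
      then show ?thesis
        using less.prems(2) by blast
    next
      case True
      then obtain g where "(\<Sum>v\<in>S. g v *\<^sub>R v) = 0" and "\<exists>v\<in>S. 0 < g v"
        using dependent_finite_pos[OF less.prems(1)] by blast
      then obtain v0 m where "v0 \<in> S" "m v0 = 0" "\<forall>v\<in>S. 0 \<le> m v"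
        and m: "(\<Sum>v\<in>S. m v *\<^sub>R v) = (\<Sum>v\<in>S. l v *\<^sub>R v)"
        using conic_combination_eliminate[OF less.prems] by blast
      have "card (S - {v0}) < card S"
        using less.prems(1) \<open>v0 \<in> S\<close> by (rule card_Diff1_less)
      moreover have "\<forall>v\<in>S - {v0}. 0 \<le> m v"
        using \<open>\<forall>v\<in>S. 0 \<le> m v\<close> by blast
      ultimately have "\<exists>T m'. T \<subseteq> S - {v0} \<and> independent T \<and> (\<forall>v\<in>T. 0 \<le> m' v) \<and>
          (\<Sum>v\<in>S - {v0}. m v *\<^sub>R v) = (\<Sum>v\<in>T. m' v *\<^sub>R v)"
        using less.prems(1) by (intro less.hyps) auto
      then obtain T m' where "T \<subseteq> S - {v0}" "independent T" "\<forall>v\<in>T. 0 \<le> m' v"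
        and m': "(\<Sum>v\<in>S - {v0}. m v *\<^sub>R v) = (\<Sum>v\<in>T. m' v *\<^sub>R v)"
        by blast
      have "(\<Sum>v\<in>S. l v *\<^sub>R v) = (\<Sum>v\<in>S. m v *\<^sub>R v)"
        by (rule m[symmetric])
      also have "\<dots> = (\<Sum>v\<in>S - {v0}. m v *\<^sub>R v)"
        using sum.remove[OF less.prems(1) \<open>v0 \<in> S\<close>, of "\<lambda>v. m v *\<^sub>R v"] \<open>m v0 = 0\<close> by simp
      also have "\<dots> = (\<Sum>v\<in>T. m' v *\<^sub>R v)"
        by (rule m')
      finally show ?thesis
        using \<open>T \<subseteq> S - {v0}\<close> \<open>independent T\<close> \<open>\<forall>v\<in>T. 0 \<le> m' v\<close> by blast
    qed
  qed
  then show ?thesis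
    using that by blast
qed

lemma independent_coefficients_bounded:
  fixes T :: "'a::euclidean_space set"
  assumes "independent T"
  obtains C where "\<And>g. (\<Sum>v\<in>T. \<bar>g v\<bar>) \<le> C * norm (\<Sum>v\<in>T. g v *\<^sub>R v)"
proof -
  have "finite T"
    using independent_bound[OF assms] by blast
  have "\<exists>B. \<forall>g. \<bar>g v\<bar> \<le> B * norm (\<Sum>u\<in>T. g u *\<^sub>R u)" if "v \<in> T" for v
  proof -
    obtain \<phi> :: "'a \<Rightarrow> real" where "linear \<phi>" and \<phi>: "\<forall>u\<in>T. \<phi> u = (if u = v then 1 else 0)"
      using linear_independent_extend[OF assms, of "\<lambda>u. if u = v then 1 else 0"] by blast
    obtain B where B: "\<forall>x. norm (\<phi> x) \<le> B * norm x"
      using linear_bounded[OF \<open>linear \<phi>\<close>] by blast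
    have "\<phi> (\<Sum>u\<in>T. g u *\<^sub>R u) = g v" for g
    proof -
      have "\<phi> (\<Sum>u\<in>T. g u *\<^sub>R u) = (\<Sum>u\<in>T. if u = v then g u else 0)"
        using \<phi> by (auto simp: linear_sum[OF \<open>linear \<phi>\<close>] linear_scale[OF \<open>linear \<phi>\<close>]
            intro!: sum.cong)
      also have "\<dots> = g v"
        using \<open>finite T\<close> that by simp
      finally show ?thesis .
    qed
    then have "\<bar>g v\<bar> \<le> B * norm (\<Sum>u\<in>T. g u *\<^sub>R u)" for g
      using B[rule_format, of "\<Sum>u\<in>T. g u *\<^sub>R u"] by simp
    then show ?thesis
      by blast
  qed
  then obtain B where B: "\<And>v g. v \<in> T \<Longrightarrow> \<bar>g v\<bar> \<le> B v * norm (\<Sum>u\<in>T. g u *\<^sub>R u)"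
    by metis
  show ?thesis
  proof (rule that[of "\<Sum>v\<in>T. B v"])
    fix g
    show "(\<Sum>v\<in>T. \<bar>g v\<bar>) \<le> (\<Sum>v\<in>T. B v) * norm (\<Sum>v\<in>T. g v *\<^sub>R v)"
      unfolding sum_distrib_right by (rule sum_mono) (rule B)
  qed
qed

lemma independent_subsets_coefficients_bounded:
  fixes V :: "'a::euclidean_space set"
  assumes "finite V"
  obtains C where "0 < C"
    and "\<And>T g. T \<subseteq> V \<Longrightarrow> independent T \<Longrightarrow> (\<Sum>v\<in>T. \<bar>g v\<bar>) \<le> C * norm (\<Sum>v\<in>T. g v *\<^sub>R v)"
proof -
  define Ts where "Ts = {T. T \<subseteq> V \<and> independent T}"
  have "finite Ts"
    using assms unfolding Ts_def by (auto intro: finite_subset[of _ "Pow V"])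
  have "\<forall>T\<in>Ts. \<exists>C. \<forall>g. (\<Sum>v\<in>T. \<bar>g v\<bar>) \<le> C * norm (\<Sum>v\<in>T. g v *\<^sub>R v)"
  proof
    fix T
    assume "T \<in> Ts"
    then obtain C where "\<And>g. (\<Sum>v\<in>T. \<bar>g v\<bar>) \<le> C * norm (\<Sum>v\<in>T. g v *\<^sub>R v)"
      using independent_coefficients_bounded by (auto simp: Ts_def)
    then show "\<exists>C. \<forall>g. (\<Sum>v\<in>T. \<bar>g v\<bar>) \<le> C * norm (\<Sum>v\<in>T. g v *\<^sub>R v)"
      by blast
  qed
  then obtain C where C: "\<And>T g. T \<in> Ts \<Longrightarrow> (\<Sum>v\<in>T. \<bar>g v\<bar>) \<le> C T * norm (\<Sum>v\<in>T. g v *\<^sub>R v)"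
    by metis
  define C\<^sub>0 where "C\<^sub>0 = Max (insert 1 (C ` Ts))"
  have "0 < C\<^sub>0" and C_le: "\<And>T. T \<in> Ts \<Longrightarrow> C T \<le> C\<^sub>0"
    using \<open>finite Ts\<close> by (auto simp: C\<^sub>0_def less_le_trans[OF zero_less_one])
  show ?thesis
  proof (rule that[OF \<open>0 < C\<^sub>0\<close>])
    fix T g
    assume "T \<subseteq> V" "independent T"
    then have "T \<in> Ts"
      by (simp add: Ts_def)
    have "(\<Sum>v\<in>T. \<bar>g v\<bar>) \<le> C T * norm (\<Sum>v\<in>T. g v *\<^sub>R v)"
      using C[OF \<open>T \<in> Ts\<close>] .
    also have "\<dots> \<le> C\<^sub>0 * norm (\<Sum>v\<in>T. g v *\<^sub>R v)"
      using C_le[OF \<open>T \<in> Ts\<close>] by (rule mult_right_mono) simp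
    finally show "(\<Sum>v\<in>T. \<bar>g v\<bar>) \<le> C\<^sub>0 * norm (\<Sum>v\<in>T. g v *\<^sub>R v)" .
  qed
qed

lemma farkas_convex_cone_hull:
  fixes S :: "'a::euclidean_space set"
  assumes "finite S" and dual: "\<And>d. \<forall>v\<in>S. v \<bullet> d \<le> 0 \<Longrightarrow> e \<bullet> d \<le> 0"
  shows "e \<in> convex_cone hull S"
proof (rule ccontr)
  assume "e \<notin> convex_cone hull S"
  then obtain p b where "p \<bullet> e < b" and sep: "\<forall>x\<in>convex_cone hull S. b < p \<bullet> x"
    using separating_hyperplane_closed_point[OF convex_convex_cone_hull closed_convex_cone_hull[OF assms(1)]]
    by blast
  have "b < 0"
    using sep[rule_format, OF convex_cone_hull_contains_0] by simp
  have "v \<bullet> (- p) \<le> 0" if "v \<in> S" for v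
  proof (rule ccontr)
    assume "\<not> v \<bullet> (- p) \<le> 0"
    then have "p \<bullet> v < 0"
      by (simp add: inner_commute)
    then have "(b / (p \<bullet> v)) *\<^sub>R v \<in> convex_cone hull S"
      using \<open>b < 0\<close> that by (intro convex_cone_hull_mul hull_inc) (auto simp: divide_nonpos_neg)
    then have "b < p \<bullet> ((b / (p \<bullet> v)) *\<^sub>R v)"
      using sep by blast
    then show False
      using \<open>p \<bullet> v < 0\<close> by simp
  qed
  then have "e \<bullet> (- p) \<le> 0"
    using dual by blast
  then show False
    using \<open>p \<bullet> e < b\<close> \<open>b < 0\<close> by (simp add: inner_commute)
qed

lemma polyhedral_normal_cone:
  fixes a :: "'i \<Rightarrow> 'a::euclidean_space"
  assumes "finite K" and feasible: "\<forall>k\<in>K. a k \<bullet> z \<le> c k"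
    and normal: "\<And>y. \<forall>k\<in>K. a k \<bullet> y \<le> c k \<Longrightarrow> e \<bullet> (y - z) \<le> 0"
  shows "e \<in> convex_cone hull (a ` {k\<in>K. a k \<bullet> z = c k})"
proof (rule farkas_convex_cone_hull)
  show "finite (a ` {k\<in>K. a k \<bullet> z = c k})"
    using assms(1) by simp
  fix d assume active: "\<forall>v\<in>a ` {k\<in>K. a k \<bullet> z = c k}. v \<bullet> d \<le> 0"
  have ev: "\<forall>\<^sub>F t in at_right 0. a k \<bullet> (z + t *\<^sub>R d) < c k" if "a k \<bullet> z < c k" for k
  proof -
    have "((\<lambda>t. a k \<bullet> (z + t *\<^sub>R d)) \<longlongrightarrow> a k \<bullet> (z + 0 *\<^sub>R d)) (at_right 0)"
      by (intro tendsto_intros)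
    then show ?thesis
      using order_tendstoD(2) that by simp
  qed
  have "\<forall>\<^sub>F t in at_right 0. \<forall>k\<in>{k\<in>K. a k \<bullet> z < c k}. a k \<bullet> (z + t *\<^sub>R d) < c k"
    by (rule eventually_ball_finite) (use assms(1) ev in auto)
  then have "\<forall>\<^sub>F t in at_right 0. 0 < t \<and> (\<forall>k\<in>{k\<in>K. a k \<bullet> z < c k}. a k \<bullet> (z + t *\<^sub>R d) < c k)"
    by (rule eventually_conj[OF eventually_at_right_less])
  then obtain t where "0 < t" and inactive: "\<forall>k\<in>{k\<in>K. a k \<bullet> z < c k}. a k \<bullet> (z + t *\<^sub>R d) < c k"
    using eventually_happens'[OF trivial_limit_at_right_real] by blast
  have "a k \<bullet> (z + t *\<^sub>R d) \<le> c k" if "k \<in> K" for k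
  proof (cases "a k \<bullet> z = c k")
    case True
    then show ?thesis
      using active that \<open>0 < t\<close> by (auto simp: inner_add_right mult_nonneg_nonpos)
  next
    case False
    then have "a k \<bullet> z < c k"
      using feasible that by (simp add: order.strict_iff_order)
    then show ?thesis
      using inactive that by auto
  qed
  then have "e \<bullet> ((z + t *\<^sub>R d) - z) \<le> 0"
    by (intro normal) blast
  then have "t * (e \<bullet> d) \<le> 0"
    by simp
  then show "e \<bullet> d \<le> 0"
    using \<open>0 < t\<close> by (simp add: mult_le_0_iff)
qed

lemma closest_point_polyhedral_residual:
  fixes a :: "'i \<Rightarrow> 'a::euclidean_space"
  assumes "finite K" and F: "F = {y. \<forall>k\<in>K. a k \<bullet> y \<le> c k}" and "F \<noteq> {}"
  obtains T m where "closest_point F x \<in> F"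
    and "T \<subseteq> a ` {k\<in>K. a k \<bullet> closest_point F x = c k}" and "independent T"
    and "\<forall>v\<in>T. 0 \<le> m v" and "x - closest_point F x = (\<Sum>v\<in>T. m v *\<^sub>R v)"
proof -
  have "F = (\<Inter>k\<in>K. {y. a k \<bullet> y \<le> c k})"
    by (auto simp: F)
  then have "closed F" "convex F"
    by (auto intro!: closed_INT convex_INT closed_halfspace_le convex_halfspace_le)
  define z where "z = closest_point F x"
  have "z \<in> F"
    unfolding z_def using \<open>closed F\<close> \<open>F \<noteq> {}\<close> by (rule closest_point_in_set)
  define I where "I = {k\<in>K. a k \<bullet> z = c k}"
  have "x - z \<in> convex_cone hull (a ` I)"
    unfolding I_def
  proof (rule polyhedral_normal_cone[OF assms(1)])
    show "\<forall>k\<in>K. a k \<bullet> z \<le> c k"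
      using \<open>z \<in> F\<close> by (simp add: F)
    show "(x - z) \<bullet> (y - z) \<le> 0" if "\<forall>k\<in>K. a k \<bullet> y \<le> c k" for y
      unfolding z_def using closest_point_dot[OF \<open>convex F\<close> \<open>closed F\<close>] that by (simp add: F)
  qed
  moreover have "finite (a ` I)"
    using assms(1) by (simp add: I_def)
  ultimately obtain l where "\<forall>v\<in>a ` I. 0 \<le> l v" and l: "x - z = (\<Sum>v\<in>a ` I. l v *\<^sub>R v)"
    by (elim convex_cone_hull_finite_sum[rotated])
  with \<open>finite (a ` I)\<close> obtain T m where "T \<subseteq> a ` I" "independent T" "\<forall>v\<in>T. 0 \<le> m v"
    and "(\<Sum>v\<in>a ` I. l v *\<^sub>R v) = (\<Sum>v\<in>T. m v *\<^sub>R v)"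
    by (elim conic_caratheodory)
  with l \<open>z \<in> F\<close> show ?thesis
    using that unfolding z_def I_def by simp
qed

lemma norm_le_of_conic_combination:
  fixes e :: "'a::real_inner"
  assumes e: "e = (\<Sum>v\<in>T. m v *\<^sub>R v)" and m: "\<forall>v\<in>T. 0 \<le> m v"
    and bounded_by_r: "\<forall>v\<in>T. v \<bullet> e \<le> r" and sum_m: "(\<Sum>v\<in>T. m v) \<le> C * norm e"
    and "0 \<le> C" and "0 \<le> r"
  shows "norm e \<le> C * r"
proof -
  have "norm e * norm e = e \<bullet> (\<Sum>v\<in>T. m v *\<^sub>R v)"
    by (simp add: flip: e power2_norm_eq_inner power2_eq_square)
  also have "\<dots> = (\<Sum>v\<in>T. m v * (v \<bullet> e))"
    by (simp add: inner_sum_right inner_commute)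
  also have "\<dots> \<le> (\<Sum>v\<in>T. m v) * r"
    unfolding sum_distrib_right using m bounded_by_r by (intro sum_mono mult_left_mono) auto
  also have "\<dots> \<le> (C * r) * norm e"
    using mult_right_mono[OF sum_m \<open>0 \<le> r\<close>] by (simp add: algebra_simps)
  finally have sq: "norm e * norm e \<le> (C * r) * norm e" .
  show ?thesis
  proof (cases "norm e = 0")
    case True
    then show ?thesis
      using \<open>0 \<le> C\<close> \<open>0 \<le> r\<close> by simp
  next
    case False
    then show ?thesis
      using mult_right_le_imp_le[OF sq] by simp
  qed
qed

theorem hoffman_error_bound:
  fixes a :: "'i \<Rightarrow> 'a::euclidean_space"
  assumes "finite K"
  obtains \<theta> where "0 < \<theta>"
    and "\<And>c x. \<exists>y. \<forall>k\<in>K. a k \<bullet> y \<le> c k \<Longrightarrow>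
           \<exists>z. (\<forall>k\<in>K. a k \<bullet> z \<le> c k) \<and> dist x z \<le> \<theta> * (\<Sum>k\<in>K. max 0 (a k \<bullet> x - c k))"
proof -
  obtain \<theta> where "0 < \<theta>" and \<theta>: "\<And>T g. T \<subseteq> a ` K \<Longrightarrow> independent T \<Longrightarrow>
      (\<Sum>v\<in>T. \<bar>g v\<bar>) \<le> \<theta> * norm (\<Sum>v\<in>T. g v *\<^sub>R v)"
    using independent_subsets_coefficients_bounded[of "a ` K"] assms by blast
  show ?thesis
  proof (rule that[OF \<open>0 < \<theta>\<close>])
    fix c x
    assume "\<exists>y. \<forall>k\<in>K. a k \<bullet> y \<le> c k"
    define F where "F = {y. \<forall>k\<in>K. a k \<bullet> y \<le> c k}"
    define z where "z = closest_point F x"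
    define r where "r = (\<Sum>k\<in>K. max 0 (a k \<bullet> x - c k))"
    have "F \<noteq> {}"
      using \<open>\<exists>y. \<forall>k\<in>K. a k \<bullet> y \<le> c k\<close> by (simp add: F_def)
    then obtain T m where "z \<in> F" and T: "T \<subseteq> a ` {k\<in>K. a k \<bullet> z = c k}" "independent T"
      and m: "\<forall>v\<in>T. 0 \<le> m v" and e: "x - z = (\<Sum>v\<in>T. m v *\<^sub>R v)"
      using closest_point_polyhedral_residual[OF assms F_def] unfolding z_def by blast
    have "v \<bullet> (x - z) \<le> r" if "v \<in> T" for v
    proof -
      obtain k where "k \<in> K" "a k \<bullet> z = c k" "v = a k"
        using T(1) \<open>v \<in> T\<close> by blast
      then have "v \<bullet> (x - z) = a k \<bullet> x - c k"
        by (simp add: inner_diff_right)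
      also have "\<dots> \<le> max 0 (a k \<bullet> x - c k)"
        by simp
      also have "\<dots> \<le> r"
        unfolding r_def using \<open>k \<in> K\<close> assms
        by (intro member_le_sum[of k K "\<lambda>k. max 0 (a k \<bullet> x - c k)"]) auto
      finally show ?thesis .
    qed
    moreover have "(\<Sum>v\<in>T. m v) \<le> \<theta> * norm (x - z)"
      using \<theta>[OF _ T(2), of m] T(1) m by (force simp: e)
    ultimately have "norm (x - z) \<le> \<theta> * r"
      using \<open>0 < \<theta>\<close> by (intro norm_le_of_conic_combination[OF e m]) (auto simp: r_def sum_nonneg)
    then show "\<exists>z. (\<forall>k\<in>K. a k \<bullet> z \<le> c k) \<and> dist x z \<le> \<theta> * r"
      using \<open>z \<in> F\<close> by (auto simp: F_def dist_norm)
  qed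
qed

lemma polyhedron_obtain_inequalities:
  fixes P :: "'a::euclidean_space set"
  assumes "polyhedron P"
  obtains F :: "'a set set" and \<alpha> \<beta> where "finite F" and "\<And>x. x \<in> P \<longleftrightarrow> (\<forall>h\<in>F. \<alpha> h \<bullet> x \<le> \<beta> h)"
proof -
  obtain F where "finite F" and P: "P = \<Inter>F" and F: "\<forall>h\<in>F. \<exists>a b. a \<noteq> 0 \<and> h = {x. a \<bullet> x \<le> b}"
    using assms unfolding polyhedron_def by blast
  have "\<forall>h\<in>F. \<exists>a b. \<forall>x. x \<in> h \<longleftrightarrow> a \<bullet> x \<le> b"
  proof
    fix h
    assume "h \<in> F"
    then obtain a b where "h = {x. a \<bullet> x \<le> b}"
      using F by blast
    then show "\<exists>a b. \<forall>x. x \<in> h \<longleftrightarrow> a \<bullet> x \<le> b"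
      by blast
  qed
  then obtain \<alpha> \<beta> where "\<And>h x. h \<in> F \<Longrightarrow> x \<in> h \<longleftrightarrow> \<alpha> h \<bullet> x \<le> \<beta> h"
    by metis
  with \<open>finite F\<close> show ?thesis
    using that unfolding P by blast
qed

lemma euclidean_eq_iff_inner_Basis_le:
  fixes x y :: "'a::euclidean_space"
  shows "(\<forall>b\<in>Basis \<union> uminus ` Basis. x \<bullet> b \<le> y \<bullet> b) \<longleftrightarrow> x = y"
proof
  assume le: "\<forall>b\<in>Basis \<union> uminus ` Basis. x \<bullet> b \<le> y \<bullet> b"
  show "x = y"
  proof (rule euclidean_eqI)
    fix i :: 'a
    assume "i \<in> Basis"
    then have "x \<bullet> i \<le> y \<bullet> i" "x \<bullet> (- i) \<le> y \<bullet> (- i)"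
      using le by blast+
    then show "x \<bullet> i = y \<bullet> i"
      by simp
  qed
qed simp

lemma polyhedron_fibre_inequalities:
  fixes f :: "'a::euclidean_space \<Rightarrow> 'b::euclidean_space"
  assumes "polyhedron P" and "linear f"
  obtains K :: "('a set + 'b) set" and a c where "finite K" and "K \<noteq> {}"
    and "\<And>z u. (\<forall>k\<in>K. a k \<bullet> z \<le> c u k) \<longleftrightarrow> z \<in> P \<and> f z = u"
    and "\<And>x u. x \<in> P \<Longrightarrow> (\<Sum>k\<in>K. max 0 (a k \<bullet> x - c u k)) \<le> card K * norm (f x - u)"
proof -
  obtain F :: "'a set set" and \<alpha> \<beta> where "finite F" and P: "\<And>x. x \<in> P \<longleftrightarrow> (\<forall>h\<in>F. \<alpha> h \<bullet> x \<le> \<beta> h)"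
    using polyhedron_obtain_inequalities[OF assms(1)] by blast
  define E :: "'b set" where "E = Basis \<union> uminus ` Basis"
  define K where "K = Inl ` F \<union> Inr ` E"
  define a where "a = case_sum \<alpha> (adjoint f)"
  define c where "c u = case_sum \<beta> (\<lambda>b. u \<bullet> b)" for u :: 'b
  have adjoint: "adjoint f b \<bullet> x = f x \<bullet> b" for b x
    by (simp add: inner_commute adjoint_works[OF assms(2)])
  have "max 0 (a k \<bullet> x - c u k) \<le> norm (f x - u)" if "x \<in> P" "k \<in> K" for x u k
  proof (cases k)
    case (Inl h)
    then have "a k \<bullet> x \<le> c u k"
      using that by (auto simp: P K_def a_def c_def)
    then show ?thesis
      by simp
  next
    case (Inr b)
    then have "norm b = 1"
      using \<open>k \<in> K\<close> by (auto simp: K_def E_def)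
    have "a k \<bullet> x - c u k = (f x - u) \<bullet> b"
      using Inr by (simp add: a_def c_def adjoint inner_diff_left)
    also have "\<dots> \<le> norm (f x - u)"
      using norm_cauchy_schwarz[of "f x - u" b] \<open>norm b = 1\<close> by simp
    finally show ?thesis
      by simp
  qed
  then have "(\<Sum>k\<in>K. max 0 (a k \<bullet> x - c u k)) \<le> card K * norm (f x - u)" if "x \<in> P" for x u
    using sum_mono[of K "\<lambda>k. max 0 (a k \<bullet> x - c u k)" "\<lambda>k. norm (f x - u)"] that by simp
  moreover have "(\<forall>k\<in>K. a k \<bullet> z \<le> c u k) \<longleftrightarrow> z \<in> P \<and> f z = u" for z u
    using euclidean_eq_iff_inner_Basis_le[of "f z" u]
    by (simp add: P K_def E_def a_def c_def adjoint ball_Un)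
  moreover have "finite K" "K \<noteq> {}"
    using \<open>finite F\<close> by (simp_all add: K_def E_def)
  ultimately show ?thesis
    using that by blast
qed

lemma polyhedron_linear_fibre_error_bound:
  fixes f :: "'a::euclidean_space \<Rightarrow> 'b::euclidean_space"
  assumes "polyhedron P" and "linear f"
  obtains \<theta> where "0 < \<theta>"
    and "\<And>x z0. x \<in> P \<Longrightarrow> z0 \<in> P \<Longrightarrow> \<exists>z\<in>P. f z = f z0 \<and> dist x z \<le> \<theta> * norm (f x - f z0)"
proof -
  obtain K :: "('a set + 'b) set" and a c where "finite K" "K \<noteq> {}"
    and fibre_iff: "\<And>z u. (\<forall>k\<in>K. a k \<bullet> z \<le> c u k) \<longleftrightarrow> z \<in> P \<and> f z = u"
    and residual: "\<And>x u. x \<in> P \<Longrightarrow> (\<Sum>k\<in>K. max 0 (a k \<bullet> x - c u k)) \<le> card K * norm (f x - u)"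
    using polyhedron_fibre_inequalities[OF assms] by blast
  obtain \<theta> where "0 < \<theta>" and hoffman: "\<And>c x. \<exists>y. \<forall>k\<in>K. a k \<bullet> y \<le> c k \<Longrightarrow>
      \<exists>z. (\<forall>k\<in>K. a k \<bullet> z \<le> c k) \<and> dist x z \<le> \<theta> * (\<Sum>k\<in>K. max 0 (a k \<bullet> x - c k))"
    using hoffman_error_bound[OF \<open>finite K\<close>, of a] by blast
  show ?thesis
  proof (rule that[of "\<theta> * card K"])
    show "0 < \<theta> * card K"
      using \<open>0 < \<theta>\<close> \<open>finite K\<close> \<open>K \<noteq> {}\<close> by (simp add: card_gt_0_iff)
    fix x z0
    assume "x \<in> P" "z0 \<in> P"
    then have "\<exists>y. \<forall>k\<in>K. a k \<bullet> y \<le> c (f z0) k"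
      using fibre_iff by blast
    from hoffman[OF this] obtain z where z: "\<forall>k\<in>K. a k \<bullet> z \<le> c (f z0) k"
      and dist: "dist x z \<le> \<theta> * (\<Sum>k\<in>K. max 0 (a k \<bullet> x - c (f z0) k))"
      by blast
    have "dist x z \<le> \<theta> * (card K * norm (f x - f z0))"
      using order_trans[OF dist mult_left_mono[OF residual[OF \<open>x \<in> P\<close>]]] \<open>0 < \<theta>\<close> by simp
    then show "\<exists>z\<in>P. f z = f z0 \<and> dist x z \<le> \<theta> * card K * norm (f x - f z0)"
      using z fibre_iff by (auto simp: mult.assoc)
  qed
qed

lemma lipschitz_on_Max_inner:
  fixes w :: "'i \<Rightarrow> 'a::real_inner"
  assumes "finite I" and "I \<noteq> {}"
  shows "(Max ((\<lambda>i. norm (w i)) ` I))-lipschitz_on UNIV (\<lambda>z. Max ((\<lambda>i. w i \<bullet> z) ` I))"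
proof -
  define L where "L = Max ((\<lambda>i. norm (w i)) ` I)"
  have norm_le: "norm (w i) \<le> L" if "i \<in> I" for i
    unfolding L_def using assms(1) that by (intro Max_ge) auto
  have one_sided: "Max ((\<lambda>i. w i \<bullet> x) ` I) - Max ((\<lambda>i. w i \<bullet> y) ` I) \<le> L * dist x y" for x y
  proof -
    have "Max ((\<lambda>i. w i \<bullet> x) ` I) \<in> (\<lambda>i. w i \<bullet> x) ` I"
      using assms by (intro Max_in) auto
    then obtain i where "i \<in> I" and max_x: "Max ((\<lambda>i. w i \<bullet> x) ` I) = w i \<bullet> x"
      by blast
    have "w i \<bullet> y \<le> Max ((\<lambda>i. w i \<bullet> y) ` I)"
      using assms(1) \<open>i \<in> I\<close> by (intro Max_ge) auto
    then have "Max ((\<lambda>i. w i \<bullet> x) ` I) - Max ((\<lambda>i. w i \<bullet> y) ` I) \<le> w i \<bullet> (x - y)"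
      by (simp add: max_x inner_diff_right)
    also have "\<dots> \<le> norm (w i) * norm (x - y)"
      by (rule norm_cauchy_schwarz)
    also have "\<dots> \<le> L * dist x y"
      using norm_le[OF \<open>i \<in> I\<close>] by (simp add: dist_norm mult_right_mono)
    finally show ?thesis .
  qed
  have "0 \<le> L"
    using assms(2) norm_le norm_ge_zero order_trans by blast
  show ?thesis
    unfolding L_def[symmetric]
  proof (rule lipschitz_onI[OF _ \<open>0 \<le> L\<close>])
    fix x y :: 'a
    show "dist (Max ((\<lambda>i. w i \<bullet> x) ` I)) (Max ((\<lambda>i. w i \<bullet> y) ` I)) \<le> L * dist x y"
      using one_sided[of x y] one_sided[of y x] by (simp add: dist_real_def dist_commute abs_le_iff)
  qed
qed

lemma inner_le_Max_inner_if_mem_convex_hull: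
  fixes w :: "'i \<Rightarrow> 'a::real_inner"
  assumes "finite I" and "v \<in> convex hull (w ` I)"
  shows "v \<bullet> z \<le> Max ((\<lambda>i. w i \<bullet> z) ` I)"
proof -
  have "convex hull (w ` I) \<subseteq> {x. z \<bullet> x \<le> Max ((\<lambda>i. w i \<bullet> z) ` I)}"
  proof (rule hull_minimal)
    show "w ` I \<subseteq> {x. z \<bullet> x \<le> Max ((\<lambda>i. w i \<bullet> z) ` I)}"
      using assms(1) by (auto simp: inner_commute)
  qed (rule convex_halfspace_le)
  then show ?thesis
    using assms(2) by (auto simp: inner_commute)
qed

lemma fenchel_conj_Max_inner_outside:
  fixes w :: "'i \<Rightarrow> 'a::euclidean_space"
  assumes "finite I" and "I \<noteq> {}" and "v \<notin> convex hull (w ` I)"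
  shows "fenchel_conj (\<lambda>z. Max ((\<lambda>i. w i \<bullet> z) ` I)) v = \<infinity>"
proof -
  define \<omega> where "\<omega> = (\<lambda>z. Max ((\<lambda>i. w i \<bullet> z) ` I))"
  obtain p b where "p \<bullet> v < b" and sep: "\<forall>x\<in>convex hull (w ` I). b < p \<bullet> x"
    using separating_hyperplane_closed_point[OF convex_convex_hull _ assms(3)] assms(1)
    by (auto simp: compact_imp_closed compact_convex_hull finite_imp_compact)
  have "ereal (t * (b - p \<bullet> v)) \<le> fenchel_conj \<omega> v" if "0 \<le> t" for t
  proof -
    have "w i \<bullet> (- t *\<^sub>R p) \<le> - t * b" if "i \<in> I" for i
    proof -
      have "b \<le> p \<bullet> w i"
        using sep hull_inc[of "w i" "w ` I"] that by (simp add: less_imp_le)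
      then show ?thesis
        using mult_left_mono[OF _ \<open>0 \<le> t\<close>] by (simp add: inner_commute)
    qed
    then have "\<omega> (- t *\<^sub>R p) \<le> - t * b"
      unfolding \<omega>_def using assms(1,2) by (simp add: Max_le_iff)
    then have "t * (b - p \<bullet> v) \<le> v \<bullet> (- t *\<^sub>R p) - \<omega> (- t *\<^sub>R p)"
      by (simp add: inner_commute algebra_simps)
    also have "ereal \<dots> \<le> fenchel_conj \<omega> v"
      unfolding fenchel_conj_def by (rule SUP_upper) simp
    finally show ?thesis
      by simp
  qed
  then have "fenchel_conj \<omega> v = \<infinity>"
  proof (intro ereal_top)
    fix r :: real
    have "r \<le> (max 0 r / (b - p \<bullet> v)) * (b - p \<bullet> v)"
      using \<open>p \<bullet> v < b\<close> by simp
    also have "ereal \<dots> \<le> fenchel_conj \<omega> v"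
      using \<open>p \<bullet> v < b\<close> by (intro \<open>\<And>t. 0 \<le> t \<Longrightarrow> _\<close>) simp
    finally show "ereal r \<le> fenchel_conj \<omega> v"
      by simp
  qed
  then show ?thesis
    by (simp add: \<omega>_def)
qed

lemma fenchel_conj_Max_inner:
  fixes w :: "'i \<Rightarrow> 'a::euclidean_space"
  assumes "finite I" and "I \<noteq> {}"
  shows "fenchel_conj (\<lambda>z. Max ((\<lambda>i. w i \<bullet> z) ` I)) v = (if v \<in> convex hull (w ` I) then 0 else \<infinity>)"
proof (cases "v \<in> convex hull (w ` I)")
  case True
  then have "fenchel_conj (\<lambda>z. Max ((\<lambda>i. w i \<bullet> z) ` I)) v \<le> 0"
    unfolding fenchel_conj_def using assms(1)
    by (intro SUP_least) (simp add: zero_ereal_def inner_le_Max_inner_if_mem_convex_hull)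
  moreover have "0 \<le> fenchel_conj (\<lambda>z. Max ((\<lambda>i. w i \<bullet> z) ` I)) v"
    unfolding fenchel_conj_def using assms(2)
    by (intro SUP_upper2[of 0]) (simp_all add: zero_ereal_def image_constant_conv)
  ultimately show ?thesis
    using True by simp
qed (simp add: assms fenchel_conj_Max_inner_outside)

lemma inner_vector_matrix: "x \<bullet> (z v* (B :: real^'m^'n)) = z \<bullet> (B *v x)"
  by (metis dot_lmul_matrix inner_commute)

(* The smooth part v \<mapsto> h_lambda (B v) of the objective, with the square in h_lambda expanded
   (see scaled_sq_dist_eq). *)
definition quadratic_composite :: "real^'m^'n \<Rightarrow> real \<Rightarrow> real^'n \<Rightarrow> real^'m \<Rightarrow> real" where
  "quadratic_composite B lam y v = lam / 2 * (norm (B *v v))\<^sup>2 - (B *v v) \<bullet> y"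

lemma scaled_sq_dist_eq:
  fixes u y :: "'a::real_inner"
  assumes "lam \<noteq> 0"
  shows "1 / (2 * lam) * (norm (lam *\<^sub>R u - y))\<^sup>2 - 1 / (2 * lam) * (norm y)\<^sup>2 =
    lam / 2 * (norm u)\<^sup>2 - u \<bullet> y"
proof -
  have "(norm (lam *\<^sub>R u - y))\<^sup>2 = lam\<^sup>2 * (norm u)\<^sup>2 - 2 * lam * (u \<bullet> y) + (norm y)\<^sup>2"
    unfolding power2_norm_eq_inner
    by (simp add: inner_diff_left inner_diff_right inner_commute power2_eq_square algebra_simps)
  then show ?thesis
    using assms by (simp add: field_simps power2_eq_square)
qed

lemma quadratic_composite_expand:
  "quadratic_composite B lam y (w + d) =
     quadratic_composite B lam y w + (transpose B *v (lam *\<^sub>R (B *v w) - y)) \<bullet> d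
       + lam / 2 * (norm (B *v d))\<^sup>2"
proof -
  have "(transpose B *v (lam *\<^sub>R (B *v w) - y)) \<bullet> d = (lam *\<^sub>R (B *v w) - y) \<bullet> (B *v d)"
    by (simp add: dot_lmul_matrix)
  then show ?thesis
    unfolding quadratic_composite_def
    by (simp add: matrix_vector_right_distrib power2_norm_eq_inner inner_add_left inner_add_right
        inner_diff_left inner_commute algebra_simps)
qed

lemma quadratic_composite_has_derivative:
  "(quadratic_composite B lam y has_derivative
      (\<lambda>d. (transpose B *v (lam *\<^sub>R (B *v w) - y)) \<bullet> d)) (at w)"
proof -
  have lin: "((\<lambda>v. B *v v) has_derivative (\<lambda>d. B *v d)) (at w)"
    by (rule bounded_linear_imp_has_derivative[OF matrix_vector_mul_bounded_linear])
  have "quadratic_composite B lam y = (\<lambda>v. lam / 2 * ((B *v v) \<bullet> (B *v v)) - (B *v v) \<bullet> y)"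
    by (simp add: fun_eq_iff quadratic_composite_def power2_norm_eq_inner)
  moreover have "((\<lambda>v. lam / 2 * ((B *v v) \<bullet> (B *v v)) - (B *v v) \<bullet> y) has_derivative
      (\<lambda>d. (transpose B *v (lam *\<^sub>R (B *v w) - y)) \<bullet> d)) (at w)"
    by (rule has_derivative_eq_rhs[OF has_derivative_diff[OF has_derivative_mult[OF
          has_derivative_const has_derivative_inner[OF lin lin]] has_derivative_inner[OF lin has_derivative_const]]])
      (simp add: fun_eq_iff inner_vector_matrix inner_diff_left inner_commute algebra_simps)
  ultimately show ?thesis
    by simp
qed

lemma convex_on_UNIV_gradient_inequality:
  fixes f :: "'a::real_inner \<Rightarrow> real"
  assumes "\<And>x w. f w + G w \<bullet> (x - w) \<le> f x"
  shows "convex_on UNIV f"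
proof (rule convex_onI)
  fix t :: real and x y :: 'a
  assume "0 < t" "t < 1"
  define z where "z = (1 - t) *\<^sub>R x + t *\<^sub>R y"
  have "(1 - t) * (f z + G z \<bullet> (x - z)) + t * (f z + G z \<bullet> (y - z)) \<le> (1 - t) * f x + t * f y"
    using assms[of z x] assms[of z y] \<open>0 < t\<close> \<open>t < 1\<close> by (intro add_mono mult_left_mono) auto
  moreover have "(1 - t) * (f z + G z \<bullet> (x - z)) + t * (f z + G z \<bullet> (y - z)) =
      f z + G z \<bullet> ((1 - t) *\<^sub>R (x - z) + t *\<^sub>R (y - z))"
    by (simp add: inner_add_right algebra_simps)
  moreover have "(1 - t) *\<^sub>R (x - z) + t *\<^sub>R (y - z) = 0"
    by (simp add: z_def algebra_simps)
  ultimately show "f ((1 - t) *\<^sub>R x + t *\<^sub>R y) \<le> (1 - t) * f x + t * f y"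
    by (simp add: z_def)
qed simp

lemma convex_on_quadratic_composite:
  assumes "0 \<le> lam"
  shows "convex_on UNIV (quadratic_composite B lam y)"
proof (rule convex_on_UNIV_gradient_inequality)
  fix x w
  show "quadratic_composite B lam y w + (transpose B *v (lam *\<^sub>R (B *v w) - y)) \<bullet> (x - w)
      \<le> quadratic_composite B lam y x"
    using quadratic_composite_expand[of B lam y w "x - w"] assms by simp
qed

lemma norm_matrix_vector_le_sqrt_onorm_gram:
  fixes A :: "real^'n^'m"
  shows "norm (A *v x) \<le> sqrt (onorm (\<lambda>x. (transpose A ** A) *v x)) * norm x"
proof -
  define M where "M = onorm (\<lambda>x. (transpose A ** A) *v x)"
  have "0 \<le> M"
    unfolding M_def by (rule onorm_pos_le[OF matrix_vector_mul_bounded_linear])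
  have "(norm (A *v x))\<^sup>2 = x \<bullet> ((transpose A ** A) *v x)"
    by (simp add: power2_norm_eq_inner inner_vector_matrix flip: matrix_vector_mul_assoc)
  also have "\<dots> \<le> norm x * norm ((transpose A ** A) *v x)"
    by (rule norm_cauchy_schwarz)
  also have "\<dots> \<le> norm x * (M * norm x)"
    unfolding M_def by (intro mult_left_mono onorm[OF matrix_vector_mul_bounded_linear]) simp
  also have "\<dots> = (sqrt M * norm x)\<^sup>2"
    using \<open>0 \<le> M\<close> by (simp add: power_mult_distrib power2_eq_square)
  finally show ?thesis
    unfolding M_def[symmetric] by (rule power2_le_imp_le) (simp add: \<open>0 \<le> M\<close>)
qed

(* The theorem measures smoothness by the Gram operator of A, although f involves A^T;
   this works because A and A^T have the same operator norm. *)
lemma norm_transpose_matrix_vector_le: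
  fixes A :: "real^'n^'m"
  shows "(norm (transpose A *v d))\<^sup>2 \<le> onorm (\<lambda>x. (transpose A ** A) *v x) * (norm d)\<^sup>2"
proof -
  define M where "M = onorm (\<lambda>x. (transpose A ** A) *v x)"
  define x where "x = transpose A *v d"
  have "0 \<le> M"
    unfolding M_def by (rule onorm_pos_le[OF matrix_vector_mul_bounded_linear])
  have "norm x * norm x = (d v* A) \<bullet> x"
    by (simp add: x_def dot_square_norm power2_eq_square)
  also have "\<dots> = d \<bullet> (A *v x)"
    by (rule dot_lmul_matrix)
  also have "\<dots> \<le> norm d * norm (A *v x)"
    by (rule norm_cauchy_schwarz)
  also have "\<dots> \<le> norm d * (sqrt M * norm x)"
    unfolding M_def by (intro mult_left_mono norm_matrix_vector_le_sqrt_onorm_gram) simp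
  finally have "norm x \<le> sqrt M * norm d"
    by (cases "norm x = 0") (simp_all add: \<open>0 \<le> M\<close> mult.commute mult.left_commute)
  then have "(norm x)\<^sup>2 \<le> (sqrt M * norm d)\<^sup>2"
    by (rule power_mono) simp
  then show ?thesis
    using \<open>0 \<le> M\<close> by (simp add: x_def M_def power_mult_distrib)
qed

lemma lipschitz_smooth_quadratic_composite:
  fixes A :: "real^'n^'m"
  assumes "0 \<le> lam"
  shows "lipschitz_smooth (quadratic_composite (transpose A) lam y)
    (lam * onorm (\<lambda>x. (transpose A ** A) *v x))"
proof -
  define M where "M = onorm (\<lambda>x. (transpose A ** A) *v x)"
  define g where "g w = A *v (lam *\<^sub>R (transpose A *v w) - y)" for w
  have deriv: "(quadratic_composite (transpose A) lam y has_derivative (\<lambda>d. g w \<bullet> d)) (at w)" for w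
    using quadratic_composite_has_derivative[of "transpose A" lam y w] by (simp add: g_def)
  have taylor: "quadratic_composite (transpose A) lam y u - quadratic_composite (transpose A) lam y w
      - g w \<bullet> (u - w) \<le> lam * M / 2 * (norm (u - w))\<^sup>2" for u w
  proof -
    have "quadratic_composite (transpose A) lam y u - quadratic_composite (transpose A) lam y w
        - g w \<bullet> (u - w) = lam / 2 * (norm (transpose A *v (u - w)))\<^sup>2"
      using quadratic_composite_expand[of "transpose A" lam y w "u - w"] by (simp add: g_def)
    also have "\<dots> \<le> lam / 2 * (M * (norm (u - w))\<^sup>2)"
      unfolding M_def using assms by (intro mult_left_mono norm_transpose_matrix_vector_le) simp
    finally show ?thesis
      by simp
  qed
  show ?thesis
    unfolding lipschitz_smooth_def M_def[symmetric] by (intro exI[of _ g] conjI allI deriv taylor)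
qed

lemma convex_minimizer_growth:
  fixes f :: "'a::real_inner \<Rightarrow> real"
  assumes "convex P" and "v0 \<in> P" and min: "\<And>v. v \<in> P \<Longrightarrow> f v0 \<le> f v"
    and expand: "\<And>d. f (v0 + d) = f v0 + g \<bullet> d + Q d"
    and homogeneous: "\<And>t d. Q (t *\<^sub>R d) = t\<^sup>2 * Q d"
    and "v \<in> P"
  shows "f v0 + Q (v - v0) \<le> f v"
proof -
  define d where "d = v - v0"
  have pos: "0 \<le> g \<bullet> d + t * Q d" if "0 < t" "t < 1" for t
  proof -
    have "v0 + t *\<^sub>R d = (1 - t) *\<^sub>R v0 + t *\<^sub>R v"
      by (simp add: d_def algebra_simps)
    then have "v0 + t *\<^sub>R d \<in> P"
      using convexD_alt[OF assms(1,2) \<open>v \<in> P\<close>] that by simp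
    then have "f v0 \<le> f v0 + t * (g \<bullet> d + t * Q d)"
      using min[of "v0 + t *\<^sub>R d"] expand[of "t *\<^sub>R d"] homogeneous[of t d]
      by (simp add: algebra_simps power2_eq_square)
    then show ?thesis
      using \<open>0 < t\<close> by (simp add: zero_le_mult_iff)
  qed
  have "\<forall>\<^sub>F t in at_right 0. 0 \<le> g \<bullet> d + t * Q d"
    unfolding eventually_at_right[OF zero_less_one] using pos by (intro exI[of _ 1]) auto
  moreover have "((\<lambda>t. g \<bullet> d + t * Q d) \<longlongrightarrow> g \<bullet> d + 0 * Q d) (at_right 0)"
    by (intro tendsto_intros)
  ultimately have "0 \<le> g \<bullet> d"
    using tendsto_lowerbound[OF _ _ trivial_limit_at_right_real] by simp
  then show ?thesis
    using expand[of d] by (simp add: d_def)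
qed

lemma quadratic_composite_minimizer_growth:
  assumes "compact P" and "convex P" and "P \<noteq> {}"
  obtains v0 where "v0 \<in> P"
    and "\<And>v. v \<in> P \<Longrightarrow> quadratic_composite B lam y v0 + lam / 2 * (norm (B *v v - B *v v0))\<^sup>2
      \<le> quadratic_composite B lam y v"
proof -
  have "continuous_on P (quadratic_composite B lam y)"
    unfolding quadratic_composite_def by (intro continuous_intros)
  from continuous_attains_inf[OF assms(1,3) this] obtain v0 where "v0 \<in> P"
    and min: "\<forall>v\<in>P. quadratic_composite B lam y v0 \<le> quadratic_composite B lam y v"
    by blast
  show ?thesis
  proof (rule that[OF \<open>v0 \<in> P\<close>])
    fix v
    assume "v \<in> P"
    have "quadratic_composite B lam y v0 + lam / 2 * (norm (B *v (v - v0)))\<^sup>2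
        \<le> quadratic_composite B lam y v"
      by (rule convex_minimizer_growth[OF assms(2) \<open>v0 \<in> P\<close> _ quadratic_composite_expand _ \<open>v \<in> P\<close>])
        (use min in \<open>simp_all add: matrix_vector_mult_scaleR power_mult_distrib\<close>)
    then show "quadratic_composite B lam y v0 + lam / 2 * (norm (B *v v - B *v v0))\<^sup>2
        \<le> quadratic_composite B lam y v"
      by (simp add: matrix_vector_mult_diff_distrib)
  qed
qed

lemma minimizers_restriction_eq_fibre:
  fixes L :: "'a \<Rightarrow> 'b::real_normed_vector"
  assumes "0 < lam" and "v0 \<in> P"
    and fibre: "\<And>v. L v = L v0 \<Longrightarrow> f v = f v0"
    and growth: "\<And>v. v \<in> P \<Longrightarrow> f v0 + lam / 2 * (norm (L v - L v0))\<^sup>2 \<le> f v"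
  shows "minimizers (\<lambda>v. if v \<in> P then ereal (f v) else \<infinity>) = {v \<in> P. L v = L v0}"
proof (intro equalityI subsetI)
  fix s
  assume "s \<in> {v \<in> P. L v = L v0}"
  moreover have "f v0 \<le> f u" if "u \<in> P" for u
  proof -
    have "0 \<le> lam / 2 * (norm (L u - L v0))\<^sup>2"
      using assms(1) by simp
    then show ?thesis
      using growth[OF that] by linarith
  qed
  ultimately show "s \<in> minimizers (\<lambda>v. if v \<in> P then ereal (f v) else \<infinity>)"
    using fibre[of s] by (simp add: minimizers_def)
next
  fix s
  assume "s \<in> minimizers (\<lambda>v. if v \<in> P then ereal (f v) else \<infinity>)"
  then have "s \<in> P" and "f s \<le> f v0"
    using \<open>v0 \<in> P\<close> unfolding minimizers_def by (auto dest!: spec[of _ v0] split: if_splits)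
  then have "lam / 2 * (norm (L s - L v0))\<^sup>2 \<le> 0"
    using growth[of s] by linarith
  then show "s \<in> {v \<in> P. L v = L v0}"
    using \<open>0 < lam\<close> \<open>s \<in> P\<close> by (simp add: mult_le_0_iff)
qed

lemma quadratic_growth_of_error_bound:
  fixes L :: "'a::real_normed_vector \<Rightarrow> 'b::real_normed_vector"
  assumes "0 < lam" and "0 < \<theta>" and "v0 \<in> P"
    and fibre: "\<And>v. L v = L v0 \<Longrightarrow> f v = f v0"
    and growth: "\<And>v. v \<in> P \<Longrightarrow> f v0 + lam / 2 * (norm (L v - L v0))\<^sup>2 \<le> f v"
    and error_bound: "\<And>v. v \<in> P \<Longrightarrow> \<exists>z\<in>P. L z = L v0 \<and> dist v z \<le> \<theta> * norm (L v - L v0)"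
  shows "quadratic_growth (\<lambda>v. if v \<in> P then ereal (f v) else \<infinity>) (lam / \<theta>\<^sup>2)"
proof -
  define g where "g = (\<lambda>v. if v \<in> P then ereal (f v) else \<infinity>)"
  define S where "S = {v \<in> P. L v = L v0}"
  have "minimizers g = S"
    unfolding g_def S_def
    by (rule minimizers_restriction_eq_fibre[where L = L and f = f, OF assms(1,3) fibre growth])
  have dist_S: "lam / \<theta>\<^sup>2 / 2 * (infdist v S)\<^sup>2 \<le> lam / 2 * (norm (L v - L v0))\<^sup>2" if v: "v \<in> P" for v
  proof -
    obtain z where "z \<in> P" "L z = L v0" and z: "dist v z \<le> \<theta> * norm (L v - L v0)"
      using error_bound[OF v] by blast
    then have "infdist v S \<le> \<theta> * norm (L v - L v0)"
      using infdist_le[of z S v] by (simp add: S_def)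
    then have "(infdist v S)\<^sup>2 \<le> (\<theta> * norm (L v - L v0))\<^sup>2"
      by (rule power_mono) (simp add: infdist_nonneg)
    then have "lam / \<theta>\<^sup>2 / 2 * (infdist v S)\<^sup>2 \<le> lam / \<theta>\<^sup>2 / 2 * (\<theta> * norm (L v - L v0))\<^sup>2"
      using \<open>0 < lam\<close> by (intro mult_left_mono) auto
    also have "\<dots> = lam / 2 * (norm (L v - L v0))\<^sup>2"
      using \<open>0 < \<theta>\<close> by (simp add: power_mult_distrib field_simps)
    finally show ?thesis .
  qed
  show ?thesis
    unfolding quadratic_growth_def g_def[symmetric] \<open>minimizers g = S\<close>
  proof (intro conjI ballI allI)
    show "S \<noteq> {}"
      using \<open>v0 \<in> P\<close> by (auto simp: S_def)
    fix s v
    assume "s \<in> S"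
    then have "g s = f v0"
      using fibre[of s] by (simp add: g_def S_def)
    then show "\<bar>g s\<bar> \<noteq> \<infinity>"
      by simp
    show "g s + ereal (lam / \<theta>\<^sup>2 / 2 * (infdist v S)\<^sup>2) \<le> g v"
    proof (cases "v \<in> P")
      case True
      then have "f v0 + lam / \<theta>\<^sup>2 / 2 * (infdist v S)\<^sup>2 \<le> f v"
        using growth[OF True] dist_S[OF True] by linarith
      then show ?thesis
        using \<open>g s = f v0\<close> True by (simp add: g_def)
    qed (simp add: g_def)
  qed
qed

lemma quadratic_growth_quadratic_composite:
  assumes "compact P" and "convex P" and "P \<noteq> {}" and "0 < lam" and "0 < \<theta>"
    and error_bound: "\<And>x z0. x \<in> P \<Longrightarrow> z0 \<in> P \<Longrightarrow>
      \<exists>z\<in>P. B *v z = B *v z0 \<and> dist x z \<le> \<theta> * norm (B *v x - B *v z0)"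
  shows "quadratic_growth (\<lambda>v. if v \<in> P then ereal (quadratic_composite B lam y v) else \<infinity>) (lam / \<theta>\<^sup>2)"
proof -
  obtain v0 where "v0 \<in> P" and growth: "\<And>v. v \<in> P \<Longrightarrow>
      quadratic_composite B lam y v0 + lam / 2 * (norm (B *v v - B *v v0))\<^sup>2 \<le> quadratic_composite B lam y v"
    using quadratic_composite_minimizer_growth[OF assms(1-3)] by blast
  show ?thesis
    by (rule quadratic_growth_of_error_bound[where L = "\<lambda>v. B *v v",
          OF assms(4,5) \<open>v0 \<in> P\<close> _ growth error_bound[OF _ \<open>v0 \<in> P\<close>]])
      (simp add: quadratic_composite_def)
qed

theorem theorem7p6:
  fixes N :: nat
    and w :: "nat \<Rightarrow> real^'m"
    and A :: "real^'n^'m"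
    and \<omega> :: "real^'m \<Rightarrow> real"
    and h :: "real \<Rightarrow> real^'n \<Rightarrow> real^'n \<Rightarrow> real"
    and \<Psi> :: "real \<Rightarrow> real^'n \<Rightarrow> real^'m \<Rightarrow> ereal"
  assumes N: "N \<ge> 1"
    and \<omega>_def: "\<And>z. \<omega> z = Max ((\<lambda>i. w i \<bullet> z) ` {1..N})"
    and h_def: "\<And>lam y u. h lam y u =
        1 / (2 * lam) * (norm (lam *\<^sub>R u - y))\<^sup>2 - 1 / (2 * lam) * (norm y)\<^sup>2"
    and \<Psi>_def: "\<And>lam y v. \<Psi> lam y v = ereal (h lam y (transpose A *v v)) + fenchel_conj \<omega> v"
  shows "(Max ((\<lambda>i. norm (w i)) ` {1..N}))-lipschitz_on UNIV \<omega>
       \<and> bounded (edom (fenchel_conj \<omega>))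
       \<and> (\<exists>\<theta>>0.
            (\<forall>lam>0. \<forall>y.
               convex_on UNIV (\<lambda>v. h lam y (transpose A *v v))
             \<and> lipschitz_smooth (\<lambda>v. h lam y (transpose A *v v))
                   (lam * onorm (\<lambda>x. (transpose A ** A) *v x))
             \<and> minimizers (\<Psi> lam y) \<noteq> {}
             \<and> quadratic_growth (\<Psi> lam y) (lam / \<theta>\<^sup>2))
          \<and> (\<forall>lmin lam. 0 < lmin \<and> lmin \<le> lam \<longrightarrow> lam / \<theta>\<^sup>2 \<ge> lmin / \<theta>\<^sup>2))"
proof -
  let ?I = "{1..N}"
  define P where "P = convex hull (w ` ?I)"
  have I: "finite ?I" "?I \<noteq> {}"
    using N by auto
  have \<omega>: "\<omega> = (\<lambda>z. Max ((\<lambda>i. w i \<bullet> z) ` ?I))"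
    using \<omega>_def by (simp add: fun_eq_iff)
  have conj: "fenchel_conj \<omega> v = (if v \<in> P then 0 else \<infinity>)" for v
    unfolding \<omega> P_def using I by (rule fenchel_conj_Max_inner)
  have "polytope P"
    unfolding P_def polytope_def using I(1) by blast
  then have P: "compact P" "convex P" "P \<noteq> {}" "polyhedron P"
    using I(2) by (simp_all add: polytope_imp_compact polytope_imp_convex polytope_imp_polyhedron P_def)
  obtain \<theta> where "0 < \<theta>" and error_bound: "\<And>x z0. x \<in> P \<Longrightarrow> z0 \<in> P \<Longrightarrow>
      \<exists>z\<in>P. transpose A *v z = transpose A *v z0 \<and>
        dist x z \<le> \<theta> * norm (transpose A *v x - transpose A *v z0)"
    using polyhedron_linear_fibre_error_bound[OF \<open>polyhedron P\<close> matrix_vector_mul_linear] by blast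
  have "convex_on UNIV (\<lambda>v. h lam y (transpose A *v v))
      \<and> lipschitz_smooth (\<lambda>v. h lam y (transpose A *v v)) (lam * onorm (\<lambda>x. (transpose A ** A) *v x))
      \<and> minimizers (\<Psi> lam y) \<noteq> {} \<and> quadratic_growth (\<Psi> lam y) (lam / \<theta>\<^sup>2)"
    if "0 < lam" for lam y
  proof -
    have "lam \<noteq> 0"
      using that by simp
    then have h: "(\<lambda>v. h lam y (transpose A *v v)) = quadratic_composite (transpose A) lam y"
      by (simp only: fun_eq_iff h_def quadratic_composite_def scaled_sq_dist_eq[OF \<open>lam \<noteq> 0\<close>] simp_thms)
    have "\<Psi> lam y = (\<lambda>v. if v \<in> P then ereal (quadratic_composite (transpose A) lam y v) else \<infinity>)"
      by (simp add: fun_eq_iff \<Psi>_def conj flip: h)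
    then show ?thesis
      unfolding h using quadratic_growth_quadratic_composite[OF P(1-3) that \<open>0 < \<theta>\<close> error_bound] that
      by (simp add: convex_on_quadratic_composite lipschitz_smooth_quadratic_composite quadratic_growth_def)
  qed
  moreover have "bounded (edom (fenchel_conj \<omega>))"
    using \<open>compact P\<close> by (simp add: edom_def conj compact_imp_bounded)
  moreover have "(Max ((\<lambda>i. norm (w i)) ` ?I))-lipschitz_on UNIV \<omega>"
    unfolding \<omega> using I by (rule lipschitz_on_Max_inner)
  moreover have "\<forall>lmin lam. 0 < lmin \<and> lmin \<le> lam \<longrightarrow> lam / \<theta>\<^sup>2 \<ge> lmin / \<theta>\<^sup>2"
    by (simp add: divide_right_mono)
  ultimately show ?thesis
    using \<open>0 < \<theta>\<close> by blast
qed

end
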